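(* Let $V\subset\mathbb{R}^d$ be a finite set of voters, $C\subset\mathbb{R}^d$ a finite set of candidates, $k\ge1$, $f\ge0$ integers and $\sigma\ge\sigma_f(C)$ a real number. Run the following algorithm: set $T\gets\emptyset$; while there exists $J\subseteq C$ with $|J|\le f$ and $\delta(T,J)>3\sigma$: set $T\gets T\setminus J$, and then, while there exists $v\in V$ with $d(v,T)>3\sigma$, choose a candidate $c\in C\setminus J$ with $d(v,c)\le\sigma$, set $T\gets T\cup\{c\}$ and $\mathsf{wit}[c]\gets v$; finally return $T$. If $T$ is the committee computed by this algorithm, then $d(\mathsf{wit}[c],\mathsf{wit}[c'])>2\sigma$ for any two distinct $c,c'\in T$.
   Context: Distances are Euclidean; $d(v,S)=\min_{c\in S}d(v,c)$ (with $d(v,\emptyset)=\infty$). For $S\subseteq C$, $\sigma_0(S)=\max_{v\in V}d(v,S)$. For a committee $T\subseteq C$ and failing set $J\subseteq C$, $\delta(T,J)=\min_{K\subseteq C\setminus J,\ |K|=|T\cap J|}\sigma_0((T\setminus J)\cup K)$, and $\sigma_f(T)=\max_{J\subseteq C,|J|\le f}\delta(T,J)$; in particular $\sigma_f(C)$ is this quantity for $T=C$. $\mathsf{wit}[c]$ denotes the value last assigned to $c$ by the algorithm. *)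

theory Defs
  imports "HOL-Analysis.Analysis" "HOL-Library.Extended_Real"
begin


text \<open>d(v,S) = min over c in S of dist v c, with d(v, empty) = infinity.\<close>
definition dset :: "(real ^ 'd::finite) \<Rightarrow> (real ^ 'd) set \<Rightarrow> ereal" where
  "dset v S = (INF c\<in>S. ereal (dist v c))"

definition sigma0 :: "(real ^ 'd::finite) set \<Rightarrow> (real ^ 'd) set \<Rightarrow> ereal" where
  "sigma0 V S = (SUP v\<in>V. dset v S)"

text \<open>delta(T,J): min over replacements K of C minus J with |K| = |T cap J|
  (infinity if there is no such K).\<close>
definition delta :: "(real ^ 'd::finite) set \<Rightarrow> (real ^ 'd) set \<Rightarrow> (real ^ 'd) set \<Rightarrow> (real ^ 'd) set \<Rightarrow> ereal" where
  "delta V C T J = (INF K\<in>{K. K \<subseteq> C - J \<and> card K = card (T \<inter> J)}. sigma0 V ((T - J) \<union> K))"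

definition sigma_f :: "(real ^ 'd::finite) set \<Rightarrow> (real ^ 'd) set \<Rightarrow> nat \<Rightarrow> (real ^ 'd) set \<Rightarrow> ereal" where
  "sigma_f V C f T = (SUP J\<in>{J. J \<subseteq> C \<and> card J \<le> f}. delta V C T J)"

text \<open>Program point of the algorithm: at the outer while-test, or inside the
  inner while-loop belonging to the failing set J.\<close>
datatype 'p phase = Outer | Inner "'p set"

inductive alg_step :: "(real ^ 'd::finite) set \<Rightarrow> (real ^ 'd) set \<Rightarrow> nat \<Rightarrow> real
    \<Rightarrow> ((real ^ 'd::finite) set \<times> ((real ^ 'd) \<Rightarrow> (real ^ 'd)) \<times> (real ^ 'd) phase)
    \<Rightarrow> ((real ^ 'd::finite) set \<times> ((real ^ 'd) \<Rightarrow> (real ^ 'd)) \<times> (real ^ 'd) phase) \<Rightarrow> bool"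
  for V C f \<sigma> where
  outer: "\<lbrakk>J \<subseteq> C; card J \<le> f; delta V C T J > ereal (3 * \<sigma>)\<rbrakk>
     \<Longrightarrow> alg_step V C f \<sigma> (T, wit, Outer) (T - J, wit, Inner J)"
| add: "\<lbrakk>v \<in> V; dset v T > ereal (3 * \<sigma>); c \<in> C - J; dist v c \<le> \<sigma>\<rbrakk>
     \<Longrightarrow> alg_step V C f \<sigma> (T, wit, Inner J) (insert c T, wit(c := v), Inner J)"
| inner_done: "\<lbrakk>\<forall>v\<in>V. \<not> dset v T > ereal (3 * \<sigma>)\<rbrakk>
     \<Longrightarrow> alg_step V C f \<sigma> (T, wit, Inner J) (T, wit, Outer)"

text \<open>T (with witness map wit) is a committee returned by some run of the algorithm
  (the initial witness map is arbitrary: it is never read for elements of T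
  that were not assigned).\<close>
definition alg_output :: "(real ^ 'd::finite) set \<Rightarrow> (real ^ 'd) set \<Rightarrow> nat \<Rightarrow> real
    \<Rightarrow> (real ^ 'd::finite) set \<Rightarrow> ((real ^ 'd) \<Rightarrow> (real ^ 'd)) \<Rightarrow> bool" where
  "alg_output V C f \<sigma> T wit \<longleftrightarrow>
     (\<exists>wit0. (alg_step V C f \<sigma>)\<^sup>*\<^sup>* ({}, wit0, Outer) (T, wit, Outer))
     \<and> \<not> (\<exists>J. J \<subseteq> C \<and> card J \<le> f \<and> delta V C T J > ereal (3 * \<sigma>))"

end

theory Submission
  imports Defs
begin

(* Invariant: every c in T lies within \<sigma> of its witness wit c, and the witnesses of distinct
   members of T are more than 2\<sigma> apart. Removing the failing set J keeps it trivially. A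
   candidate c is added only for a voter v with d(v,T) > 3\<sigma> and d(v,c) \<le> \<sigma>; then c is new,
   and for every older c' the triangle inequality gives
   d(v, wit c') \<ge> d(v,c') - d(c', wit c') > 3\<sigma> - \<sigma> = 2\<sigma>.
   The hypothesis \<sigma> \<ge> \<sigma>_f(C) only guarantees that a suitable c exists. *)

definition witnessed_within :: "real \<Rightarrow> ('a::metric_space) set \<Rightarrow> ('a \<Rightarrow> 'a) \<Rightarrow> bool" where
  "witnessed_within r T wit \<longleftrightarrow> (\<forall>c\<in>T. dist (wit c) c \<le> r)"

definition witnesses_separated :: "real \<Rightarrow> ('a::metric_space) set \<Rightarrow> ('a \<Rightarrow> 'a) \<Rightarrow> bool" where
  "witnesses_separated r T wit \<longleftrightarrow>
     (\<forall>c\<in>T. \<forall>c'\<in>T. c \<noteq> c' \<longrightarrow> dist (wit c) (wit c') > r)"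

lemma dist_gt_if_dset_gt:
  assumes "dset v T > ereal r" and "c \<in> T"
  shows "dist v c > r"
proof -
  have "dset v T \<le> ereal (dist v c)"
    unfolding dset_def using \<open>c \<in> T\<close> by (rule INF_lower)
  with assms(1) have "ereal r < ereal (dist v c)"
    by (rule less_le_trans)
  then show ?thesis by simp
qed

lemma witness_invariants_insert:
  fixes v c :: "'a::metric_space"
  assumes within: "witnessed_within \<sigma> T wit" and separated: "witnesses_separated (2 * \<sigma>) T wit"
    and far: "\<forall>c'\<in>T. dist v c' > 3 * \<sigma>" and close: "dist v c \<le> \<sigma>"
  shows "witnessed_within \<sigma> (insert c T) (wit(c := v))"
    and "witnesses_separated (2 * \<sigma>) (insert c T) (wit(c := v))"
proof -
  have new: "c \<notin> T"
  proof
    assume "c \<in> T"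
    with far have "dist v c > 3 * \<sigma>" by blast
    with close zero_le_dist[of v c] show False by linarith
  qed
  have "dist (wit c') v > 2 * \<sigma>" if "c' \<in> T" for c'
  proof -
    have "dist v c' \<le> dist v (wit c') + dist (wit c') c'" by (rule dist_triangle)
    moreover have "dist v c' > 3 * \<sigma>" using far that by blast
    moreover have "dist (wit c') c' \<le> \<sigma>"
      using within that unfolding witnessed_within_def by blast
    ultimately show ?thesis by (simp add: dist_commute)
  qed
  with new separated show "witnesses_separated (2 * \<sigma>) (insert c T) (wit(c := v))"
    unfolding witnesses_separated_def by (auto simp: dist_commute)
  from new within close show "witnessed_within \<sigma> (insert c T) (wit(c := v))"
    unfolding witnessed_within_def by (auto simp: dist_commute)
qed

lemma alg_step_preserves_witness_invariants:
  assumes "alg_step V C f \<sigma> (T, wit, p) (T', wit', p')"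
    and "witnessed_within \<sigma> T wit" and "witnesses_separated (2 * \<sigma>) T wit"
  shows "witnessed_within \<sigma> T' wit' \<and> witnesses_separated (2 * \<sigma>) T' wit'"
  using assms
proof (cases rule: alg_step.cases)
  case outer
  with assms(2,3) show ?thesis
    unfolding witnessed_within_def witnesses_separated_def by auto
next
  case (add v c J)
  then have "\<forall>c'\<in>T. dist v c' > 3 * \<sigma>"
    using dist_gt_if_dset_gt by blast
  with add assms(2,3) show ?thesis
    using witness_invariants_insert by blast
next
  case inner_done
  with assms(2,3) show ?thesis by simp
qed

lemma alg_steps_preserve_witness_invariants:
  assumes "(alg_step V C f \<sigma>)\<^sup>*\<^sup>* (T, wit, p) (T', wit', p')"
    and "witnessed_within \<sigma> T wit" and "witnesses_separated (2 * \<sigma>) T wit"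
  shows "witnessed_within \<sigma> T' wit' \<and> witnesses_separated (2 * \<sigma>) T' wit'"
  using assms
proof (induction "(T', wit', p')" arbitrary: T' wit' p' rule: rtranclp_induct)
  case (step s)
  then show ?case
    by (cases s) (metis alg_step_preserves_witness_invariants)
qed simp

theorem lemma20:
  fixes V C :: "(real ^ 'd) set" and k f :: nat and \<sigma> :: real
    and T :: "(real ^ 'd) set" and wit :: "real ^ 'd \<Rightarrow> real ^ 'd"
  assumes "finite V" and "finite C" and "k \<ge> 1"
    and "ereal \<sigma> \<ge> sigma_f V C f C"
    and "alg_output V C f \<sigma> T wit"
  shows "\<forall>c\<in>T. \<forall>c'\<in>T. c \<noteq> c' \<longrightarrow> dist (wit c) (wit c') > 2 * \<sigma>"
proof -
  obtain wit0 where "(alg_step V C f \<sigma>)\<^sup>*\<^sup>* ({}, wit0, Outer) (T, wit, Outer)"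
    using assms(5) unfolding alg_output_def by blast
  then have "witnessed_within \<sigma> T wit \<and> witnesses_separated (2 * \<sigma>) T wit"
    by (rule alg_steps_preserve_witness_invariants)
      (simp_all add: witnessed_within_def witnesses_separated_def)
  then show ?thesis
    unfolding witnesses_separated_def by blast
qed

end
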